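(* Let $\mathcal G$ be a core network with input nodes $\iota_1,\dots,\iota_n$ and output node $o$. The absolutely super-simple nodes of $\mathcal G$ can be uniquely ordered as $\rho_1>\rho_2>\cdots>\rho_p>o$, where $a>b$ means that, for every $m$, $b$ is downstream from $a$ along every $\iota_mo$-simple path (i.e. $b$ appears after $a$ on every such path).
   Context: Node $b$ is downstream from $a$ if there is a directed path from $a$ to $b$. A core network: every node is upstream from $o$ and downstream from at least one input node. A simple path visits each node at most once; an $\iota_mo$-simple path is a simple path from $\iota_m$ to $o$. A node is absolutely super-simple if, for every $m=1,\dots,n$, it lies on every $\iota_mo$-simple path. *)

theory Defs
  imports Main
begin

definition is_path :: "('a \<times> 'a) set \<Rightarrow> 'a list \<Rightarrow> bool" where
  "is_path E P \<longleftrightarrow> P \<noteq> [] \<and> (\<forall>i. Suc i < length P \<longrightarrow> (P ! i, P ! Suc i) \<in> E)"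

definition downstream :: "('a \<times> 'a) set \<Rightarrow> 'a \<Rightarrow> 'a \<Rightarrow> bool" where
  "downstream E a b \<longleftrightarrow> (a, b) \<in> E\<^sup>*"

definition simple_path_from_to :: "('a \<times> 'a) set \<Rightarrow> 'a \<Rightarrow> 'a \<Rightarrow> 'a list \<Rightarrow> bool" where
  "simple_path_from_to E a b P \<longleftrightarrow>
     is_path E P \<and> distinct P \<and> hd P = a \<and> last P = b"

definition network :: "'a set \<Rightarrow> ('a \<times> 'a) set \<Rightarrow> nat \<Rightarrow> (nat \<Rightarrow> 'a) \<Rightarrow> 'a \<Rightarrow> bool" where
  "network V E n \<iota> out \<longleftrightarrow> finite V \<and> E \<subseteq> V \<times> V \<and> out \<in> V \<and> (\<forall>m\<in>{1..n}. \<iota> m \<in> V)"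

definition core_network :: "'a set \<Rightarrow> ('a \<times> 'a) set \<Rightarrow> nat \<Rightarrow> (nat \<Rightarrow> 'a) \<Rightarrow> 'a \<Rightarrow> bool" where
  "core_network V E n \<iota> out \<longleftrightarrow> network V E n \<iota> out \<and>
     (\<forall>v\<in>V. downstream E v out \<and> (\<exists>m\<in>{1..n}. downstream E (\<iota> m) v))"

definition abs_super_simple :: "('a \<times> 'a) set \<Rightarrow> nat \<Rightarrow> (nat \<Rightarrow> 'a) \<Rightarrow> 'a \<Rightarrow> 'a \<Rightarrow> bool" where
  "abs_super_simple E n \<iota> out v \<longleftrightarrow>
     (\<forall>m\<in>{1..n}. \<forall>P. simple_path_from_to E (\<iota> m) out P \<longrightarrow> v \<in> set P)"

definition ss_greater :: "('a \<times> 'a) set \<Rightarrow> nat \<Rightarrow> (nat \<Rightarrow> 'a) \<Rightarrow> 'a \<Rightarrow> 'a \<Rightarrow> 'a \<Rightarrow> bool" where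
  "ss_greater E n \<iota> out a b \<longleftrightarrow>
     (\<forall>m\<in>{1..n}. \<forall>P. simple_path_from_to E (\<iota> m) out P \<longrightarrow>
        (\<exists>i j. i < j \<and> j < length P \<and> P ! i = a \<and> P ! j = b))"

end

theory Submission
  imports Defs "HOL-Library.Transitive_Closure_Table"
begin

text \<open>All absolutely super-simple nodes lie on one fixed simple path \<open>P\<^sub>0\<close> from an input to
  \<open>out\<close>, and we list them in the order in which \<open>P\<^sub>0\<close> visits them. This order is the same on
  every simple path to \<open>out\<close>: if \<open>a\<close> came before the super-simple node \<open>b\<close> on a simple
  \<open>\<iota>\<^sub>m out\<close>-path but after it on another path \<open>Q\<close> to \<open>out\<close>, then following the first path up
  to \<open>a\<close> and \<open>Q\<close> from \<open>a\<close> on would give a walk from \<open>\<iota>\<^sub>m\<close> to \<open>out\<close> avoiding \<open>b\<close>, and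
  shortening it to a simple path contradicts super-simplicity of \<open>b\<close>. Uniqueness holds
  because \<open>>\<close> is asymmetric as soon as one simple path exists.\<close>

definition precedes :: "'a list \<Rightarrow> 'a \<Rightarrow> 'a \<Rightarrow> bool" where
  "precedes P a b \<longleftrightarrow> (\<exists>i j. i < j \<and> j < length P \<and> P ! i = a \<and> P ! j = b)"

lemma precedes_iff_append: "precedes P a b \<longleftrightarrow> (\<exists>xs ys zs. P = xs @ a # ys @ b # zs)"
proof
  assume "precedes P a b"
  then obtain i j where ij: "i < j" "j < length P" "P ! i = a" "P ! j = b"
    unfolding precedes_def by blast
  have "drop (Suc i) P ! (j - Suc i) = b" "j - Suc i < length (drop (Suc i) P)"
    using ij by auto
  then obtain ys zs where "drop (Suc i) P = ys @ b # zs"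
    by (metis nth_mem split_list)
  moreover have "P = take i P @ P ! i # drop (Suc i) P"
    using ij by (intro id_take_nth_drop) simp
  ultimately show "\<exists>xs ys zs. P = xs @ a # ys @ b # zs" using ij(3) by metis
next
  assume "\<exists>xs ys zs. P = xs @ a # ys @ b # zs"
  then obtain xs ys zs where "P = xs @ a # ys @ b # zs" by blast
  then show "precedes P a b"
    unfolding precedes_def
    by (intro exI[of _ "length xs"] exI[of _ "length xs + Suc (length ys)"])
       (simp add: nth_append)
qed

lemma precedes_asym:
  assumes "distinct P" "precedes P a b"
  shows "\<not> precedes P b a"
proof
  assume "precedes P b a"
  then obtain i' j' where ij': "i' < j'" "j' < length P" "P ! i' = b" "P ! j' = a"
    unfolding precedes_def by blast
  obtain i j where ij: "i < j" "j < length P" "P ! i = a" "P ! j = b"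
    using assms(2) unfolding precedes_def by blast
  have "i = j'" "j = i'"
    using ij ij' nth_eq_iff_index_eq[OF assms(1)] by (metis order.strict_trans)+
  then show False using ij(1) ij'(1) by simp
qed

lemma sorted_wrt_precedes: "sorted_wrt (precedes P) P"
  unfolding sorted_wrt_iff_nth_less precedes_def by auto

lemma precedes_last:
  assumes "x \<in> set P" "x \<noteq> last P"
  shows "precedes P x (last P)"
proof -
  obtain xs ys where P: "P = xs @ x # ys"
    using assms(1) by (auto dest: split_list)
  then have "ys \<noteq> []" using assms(2) by auto
  then have "P = xs @ x # butlast ys @ last P # []"
    using P by simp
  then show ?thesis unfolding precedes_iff_append by blast
qed

lemma sorted_wrt_set_unique:
  assumes asym: "\<And>x y. R x y \<Longrightarrow> \<not> R y x"
  shows "sorted_wrt R xs \<Longrightarrow> sorted_wrt R ys \<Longrightarrow> set xs = set ys \<Longrightarrow> xs = ys"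
proof (induction xs arbitrary: ys)
  case Nil
  then show ?case by simp
next
  case (Cons x xs)
  then obtain y ys' where ys: "ys = y # ys'" by (cases ys) auto
  have "x = y"
  proof (rule ccontr)
    assume "x \<noteq> y"
    then have "y \<in> set xs" "x \<in> set ys'" using Cons.prems(3) ys by auto
    then show False using Cons.prems(1,2) ys asym by auto
  qed
  moreover have "x \<notin> set xs" "y \<notin> set ys'" using Cons.prems(1,2) ys asym by auto
  ultimately have "set xs = set ys'" using Cons.prems(3) ys by auto
  then show ?case using Cons ys \<open>x = y\<close> by simp
qed

lemma is_path_iff_successively:
  "is_path E P \<longleftrightarrow> P \<noteq> [] \<and> successively (\<lambda>x y. (x, y) \<in> E) P"
  unfolding is_path_def successively_conv_nth by simp

lemma rtrancl_path_iff_is_path: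
  "rtrancl_path (\<lambda>u v. (u, v) \<in> E) x xs y \<longleftrightarrow> is_path E (x # xs) \<and> last (x # xs) = y"
proof (induction xs arbitrary: x)
  case Nil
  then show ?case by (auto simp: is_path_def elim: rtrancl_path.cases intro: rtrancl_path.base)
next
  case (Cons z xs)
  have "rtrancl_path (\<lambda>u v. (u, v) \<in> E) x (z # xs) y \<longleftrightarrow>
      (x, z) \<in> E \<and> rtrancl_path (\<lambda>u v. (u, v) \<in> E) z xs y"
    by (auto elim: rtrancl_path.cases intro: rtrancl_path.step)
  then show ?case using Cons.IH by (simp add: is_path_iff_successively)
qed

lemma path_imp_simple_path:
  assumes "is_path E P"
  shows "\<exists>Q. simple_path_from_to E (hd P) (last P) Q \<and> set Q \<subseteq> set P"
proof -
  obtain x xs where P: "P = x # xs" using assms by (cases P) (auto simp: is_path_def)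
  then have "rtrancl_path (\<lambda>u v. (u, v) \<in> E) x xs (last P)"
    using assms by (simp add: rtrancl_path_iff_is_path)
  then obtain xs' where "rtrancl_path (\<lambda>u v. (u, v) \<in> E) x xs' (last P)"
      "distinct (x # xs')" "set xs' \<subseteq> set xs"
    by (rule rtrancl_path_distinct)
  then show ?thesis
    using P by (intro exI[of _ "x # xs'"])
      (auto simp: simple_path_from_to_def rtrancl_path_iff_is_path)
qed

lemma rtrancl_imp_simple_path:
  assumes "(a, b) \<in> E\<^sup>*"
  shows "\<exists>P. simple_path_from_to E a b P"
proof -
  obtain xs where "rtrancl_path (\<lambda>u v. (u, v) \<in> E) a xs b"
    using assms rtranclp_eq_rtrancl_path[of "\<lambda>u v. (u, v) \<in> E"]
    by (auto simp: rtranclp_rtrancl_eq)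
  then have "is_path E (a # xs)" "last (a # xs) = b" by (simp_all add: rtrancl_path_iff_is_path)
  then show ?thesis using path_imp_simple_path[of E "a # xs"] by auto
qed

lemma is_path_splice:
  assumes "is_path E (xs @ a # ys)" "is_path E (us @ a # vs)"
  shows "is_path E (xs @ a # vs)"
  using assms by (auto simp: is_path_iff_successively successively_append_iff successively_Cons)

lemma abs_super_simple_out: "abs_super_simple E n \<iota> out out"
  unfolding abs_super_simple_def simple_path_from_to_def is_path_def by auto

lemma ss_greater_iff_precedes:
  "ss_greater E n \<iota> out a b \<longleftrightarrow>
    (\<forall>m\<in>{1..n}. \<forall>P. simple_path_from_to E (\<iota> m) out P \<longrightarrow> precedes P a b)"
  unfolding ss_greater_def precedes_def ..

lemma precedes_abs_super_simple:
  assumes b: "abs_super_simple E n \<iota> out b" and m: "m \<in> {1..n}"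
    and P: "simple_path_from_to E (\<iota> m) out P" and ab: "precedes P a b"
    and Q: "is_path E Q" "last Q = out" "a \<in> set Q"
  shows "precedes Q a b"
proof (rule ccontr)
  assume not_ab: "\<not> precedes Q a b"
  obtain ps qs rs where Pdec: "P = ps @ a # qs @ b # rs"
    using ab by (auto simp: precedes_iff_append)
  obtain us vs where Qdec: "Q = us @ a # vs"
    using Q(3) by (auto dest: split_list)
  have "b \<notin> set vs"
    using not_ab Qdec by (auto simp: precedes_iff_append dest!: split_list)
  moreover have "b \<notin> set ps" "b \<noteq> a"
    using P Pdec by (auto simp: simple_path_from_to_def)
  moreover have "is_path E (ps @ a # vs)"
    using P Q(1) Pdec Qdec is_path_splice[of E ps a "qs @ b # rs" us vs]
    by (simp add: simple_path_from_to_def)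
  moreover have "hd (ps @ a # vs) = \<iota> m" "last (ps @ a # vs) = out"
    using P Q(2) Pdec Qdec by (cases ps; cases vs; simp add: simple_path_from_to_def)+
  ultimately obtain W where "simple_path_from_to E (\<iota> m) out W" "b \<notin> set W"
    using path_imp_simple_path[of E "ps @ a # vs"] by fastforce
  then show False using b m by (auto simp: abs_super_simple_def)
qed

lemma ss_greater_if_precedes:
  assumes "abs_super_simple E n \<iota> out a" "abs_super_simple E n \<iota> out b" "m \<in> {1..n}"
    and "simple_path_from_to E (\<iota> m) out P" "precedes P a b"
  shows "ss_greater E n \<iota> out a b"
  unfolding ss_greater_iff_precedes
proof (intro ballI allI impI)
  fix m' Q
  assume "m' \<in> {1..n}" "simple_path_from_to E (\<iota> m') out Q"
  moreover from this have "a \<in> set Q" using assms(1) by (auto simp: abs_super_simple_def)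
  ultimately show "precedes Q a b"
    using precedes_abs_super_simple[OF assms(2-5)] by (auto simp: simple_path_from_to_def)
qed

lemma ss_greater_out:
  assumes "abs_super_simple E n \<iota> out a" "a \<noteq> out"
  shows "ss_greater E n \<iota> out a out"
  unfolding ss_greater_iff_precedes
proof (intro ballI allI impI)
  fix m P
  assume "m \<in> {1..n}" "simple_path_from_to E (\<iota> m) out P"
  moreover from this have "a \<in> set P" using assms(1) by (auto simp: abs_super_simple_def)
  ultimately show "precedes P a out"
    using precedes_last[of a P] assms(2) by (simp add: simple_path_from_to_def)
qed

lemma ss_greater_asym:
  assumes "m \<in> {1..n}" "simple_path_from_to E (\<iota> m) out P" "ss_greater E n \<iota> out a b"
  shows "\<not> ss_greater E n \<iota> out b a"
proof
  assume "ss_greater E n \<iota> out b a"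
  then have "precedes P b a" "precedes P a b"
    using assms unfolding ss_greater_iff_precedes by blast+
  then show False
    using assms(2) precedes_asym[of P a b] by (simp add: simple_path_from_to_def)
qed

lemma sorted_wrt_ss_greater_filter:
  assumes m: "m \<in> {1..n}" and P: "simple_path_from_to E (\<iota> m) out P"
    and S: "\<And>v. v \<in> S \<Longrightarrow> abs_super_simple E n \<iota> out v \<and> v \<noteq> out"
  shows "sorted_wrt (ss_greater E n \<iota> out) (filter (\<lambda>v. v \<in> S) P @ [out])"
proof -
  have "sorted_wrt (precedes P) (filter (\<lambda>v. v \<in> S) P)"
    by (rule sorted_wrt_filter[OF sorted_wrt_precedes])
  then have "sorted_wrt (ss_greater E n \<iota> out) (filter (\<lambda>v. v \<in> S) P)"
    by (rule sorted_wrt_mono_rel[rotated])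
       (use S in \<open>auto intro: ss_greater_if_precedes[of E n \<iota> out _ _ m P, OF _ _ m P]\<close>)
  then show ?thesis
    using S by (auto simp: sorted_wrt_append intro: ss_greater_out)
qed

theorem lemma3p17:
  fixes V :: "'a set" and E :: "('a \<times> 'a) set" and n :: nat and \<iota> :: "nat \<Rightarrow> 'a" and out :: 'a
  assumes "core_network V E n \<iota> out"
  shows "abs_super_simple E n \<iota> out out \<and>
    (\<exists>!\<rho>. distinct \<rho> \<and> set \<rho> = {v \<in> V. abs_super_simple E n \<iota> out v} - {out} \<and>
          sorted_wrt (ss_greater E n \<iota> out) (\<rho> @ [out]))"
proof -
  let ?R = "ss_greater E n \<iota> out"
  let ?S = "{v \<in> V. abs_super_simple E n \<iota> out v} - {out}"
  obtain m where m: "m \<in> {1..n}" "(\<iota> m, out) \<in> E\<^sup>*"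
    using assms by (auto simp: core_network_def network_def downstream_def)
  obtain P0 where P0: "simple_path_from_to E (\<iota> m) out P0"
    using rtrancl_imp_simple_path[OF m(2)] by blast
  define \<rho> where "\<rho> = filter (\<lambda>v. v \<in> ?S) P0"
  have "?S \<subseteq> set P0"
    using P0 m(1) by (auto simp: abs_super_simple_def)
  then have \<rho>: "distinct \<rho> \<and> set \<rho> = ?S \<and> sorted_wrt ?R (\<rho> @ [out])"
    using P0 sorted_wrt_ss_greater_filter[of m n E \<iota> out P0 ?S, OF m(1) P0]
    by (auto simp: \<rho>_def simple_path_from_to_def)
  have unique: "\<rho>' = \<rho>" if "distinct \<rho>' \<and> set \<rho>' = ?S \<and> sorted_wrt ?R (\<rho>' @ [out])" for \<rho>'
  proof -
    have "\<rho>' @ [out] = \<rho> @ [out]"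
      by (rule sorted_wrt_set_unique[OF ss_greater_asym[of m n E \<iota> out P0, OF m(1) P0]])
         (use that \<rho> in auto)
    then show ?thesis by simp
  qed
  show ?thesis
    using \<rho> unique by (intro conjI abs_super_simple_out ex1I[of _ \<rho>]) blast+
qed

end
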